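(* Let $G$ be a finite simple undirected graph and $r<s$ positive integers; run set-k on $(G,r,s)$, with processing order $R_1,R_2,\dots$. At any time $t$, for every $K_r$ $R$ that is unprocessed at time $t$, the current value $\delta(R)$ is at least the $\mathcal{S}_t$-degree of $R$. Moreover, if $t=t_k$ for some $k$, then $\delta(R)$ equals the $\mathcal{S}_t$-degree of $R$ for every such unprocessed $R$.
   Context: A $K_r$ is an $r$-clique of $G$. Procedure set-k$(G,r,s)$: enumerate all $K_r$s and $K_s$s of $G$; for every $K_r$ $R$ initialize $\delta(R)$ to the number of $K_s$s containing $R$; mark every $K_r$ unprocessed. Then repeat until all $K_r$s are processed: pick an unprocessed $K_r$ $R$ with minimum current $\delta(R)$ (ties broken arbitrarily); set $\kappa(R)=\delta(R)$; for each $K_s$ $S$ containing $R$: if some $K_r$ contained in $S$ is already marked processed, skip $S$; otherwise, for each $K_r$ $R'\subset S$ with $R'\neq R$, if $\delta(R')>\delta(R)$ then decrease $\delta(R')$ by $1$. Finally mark $R$ processed. $R_i$ denotes the $i$-th processed $K_r$; "at time $t$" means at the beginning of the iteration in which $R_t$ is processed. The sequence $\kappa(R_i)$ is non-decreasing; the transition time $t_k$ is the unique index with $\kappa(R_{t_k})=k$ and ($t_k=1$ or $\kappa(R_{t_k-1})<k$); it is defined only when some $K_r$ receives $\kappa$-value $k$. A $K_s$ $S$ is unprocessed at time $t$ if all $K_r$s contained in $S$ are unprocessed at time $t$; $\mathcal{S}_t$ is the set of such $K_s$s. For a set $\mathcal{S}$ of $K_s$s, the $\mathcal{S}$-degree of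 a $K_r$ $R$ is the number of $S\in\mathcal{S}$ containing $R$. *)

theory Defs
  imports Main
begin

definition simple_graph :: "'a set \<Rightarrow> ('a \<Rightarrow> 'a \<Rightarrow> bool) \<Rightarrow> bool" where
  "simple_graph V E \<longleftrightarrow> finite V \<and> (\<forall>x y. E x y \<longrightarrow> E y x) \<and> (\<forall>x. \<not> E x x)
     \<and> (\<forall>x y. E x y \<longrightarrow> x \<in> V \<and> y \<in> V)"

definition cliques :: "'a set \<Rightarrow> ('a \<Rightarrow> 'a \<Rightarrow> bool) \<Rightarrow> nat \<Rightarrow> 'a set set" where
  "cliques V E r = {C. C \<subseteq> V \<and> card C = r \<and> (\<forall>x\<in>C. \<forall>y\<in>C. x \<noteq> y \<longrightarrow> E x y)}"

definition init_delta :: "'a set \<Rightarrow> ('a \<Rightarrow> 'a \<Rightarrow> bool) \<Rightarrow> nat \<Rightarrow> nat \<Rightarrow> 'a set \<Rightarrow> nat" where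
  "init_delta V E r s R = card {S \<in> cliques V E s. R \<subseteq> S}"

(* Processing of one K_s S during the iteration that processes R, where P is the set of
   K_r's already marked processed (R is not yet in P). *)
definition process_Ks ::
  "'a set \<Rightarrow> ('a \<Rightarrow> 'a \<Rightarrow> bool) \<Rightarrow> nat \<Rightarrow> 'a set set \<Rightarrow> 'a set \<Rightarrow> 'a set \<Rightarrow> ('a set \<Rightarrow> nat) \<Rightarrow> ('a set \<Rightarrow> nat)" where
  "process_Ks V E r P R S \<delta> =
     (if \<exists>R'\<in>cliques V E r. R' \<subseteq> S \<and> R' \<in> P then \<delta>
      else (\<lambda>R'. if R' \<in> cliques V E r \<and> R' \<subseteq> S \<and> R' \<noteq> R \<and> \<delta> R' > \<delta> R
                 then \<delta> R' - 1 else \<delta> R'))"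

(* A run of set-k(G,r,s): Rs is the processing order (Rs ! i is R_{i+1} in the paper),
   ds i is the delta function at the beginning of the iteration processing Rs ! i
   (i.e. at paper-time i+1); ds (length Rs) is the final delta. *)
definition setk_run ::
  "'a set \<Rightarrow> ('a \<Rightarrow> 'a \<Rightarrow> bool) \<Rightarrow> nat \<Rightarrow> nat \<Rightarrow> 'a set list \<Rightarrow> (nat \<Rightarrow> 'a set \<Rightarrow> nat) \<Rightarrow> bool" where
  "setk_run V E r s Rs ds \<longleftrightarrow>
     distinct Rs \<and> set Rs = cliques V E r \<and>
     ds 0 = init_delta V E r s \<and>
     (\<forall>i < length Rs.
        (\<forall>R' \<in> cliques V E r - set (take i Rs). ds i (Rs ! i) \<le> ds i R') \<and>
        (\<exists>Ss. distinct Ss \<and> set Ss = {S \<in> cliques V E s. Rs ! i \<subseteq> S} \<and>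
              ds (Suc i) = fold (process_Ks V E r (set (take i Rs)) (Rs ! i)) Ss (ds i)))"

definition kappa_at :: "'a set list \<Rightarrow> (nat \<Rightarrow> 'a set \<Rightarrow> nat) \<Rightarrow> nat \<Rightarrow> nat" where
  "kappa_at Rs ds i = ds i (Rs ! i)"

(* 0-based index i is the transition time t_k (paper time i+1) *)
definition is_transition_time :: "'a set list \<Rightarrow> (nat \<Rightarrow> 'a set \<Rightarrow> nat) \<Rightarrow> nat \<Rightarrow> nat \<Rightarrow> bool" where
  "is_transition_time Rs ds k i \<longleftrightarrow> i < length Rs \<and> kappa_at Rs ds i = k \<and>
     (i = 0 \<or> kappa_at Rs ds (i - 1) < k)"

definition unproc_Ks :: "'a set \<Rightarrow> ('a \<Rightarrow> 'a \<Rightarrow> bool) \<Rightarrow> nat \<Rightarrow> nat \<Rightarrow> 'a set set \<Rightarrow> 'a set set" where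
  "unproc_Ks V E r s P = {S \<in> cliques V E s. \<forall>R' \<in> cliques V E r. R' \<subseteq> S \<longrightarrow> R' \<notin> P}"

definition Sdeg :: "'a set set \<Rightarrow> 'a set \<Rightarrow> nat" where
  "Sdeg \<SS> R = card {S \<in> \<SS>. R \<subseteq> S}"

end

theory Submission imports Defs begin

text \<open>When \<open>R\<close> is processed, the \<open>K\<^sub>s\<close>s that lower \<open>\<delta>(R')\<close> are exactly those in
  \<open>\<S>\<^sub>t\<close> containing both \<open>R\<close> and \<open>R'\<close>, which are also exactly the \<open>K\<^sub>s\<close>s that leave
  \<open>\<S>\<^sub>t\<close>. So \<open>\<delta>(R')\<close> drops by precisely the loss of \<open>\<S>\<^sub>t\<close>-degree, except that it is clamped
  from below at \<open>\<kappa>(R)\<close>. Hence \<open>\<delta> \<ge> \<S>\<^sub>t\<close>-degree is invariant, and once a clamping to a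
  value \<open>\<kappa> < k\<close> occurs, \<open>\<delta>\<close> stays below \<open>k\<close>. At a transition time \<open>t\<^sub>k\<close> all earlier
  \<open>\<kappa>\<close>-values are below \<open>k\<close> (\<open>\<kappa>\<close> is monotone), while every unprocessed \<open>\<delta>\<close> is at least
  \<open>\<kappa>(R\<^sub>t) = k\<close>; so no clamping has ever affected it and equality holds.\<close>

definition unblocked_Ks :: "'a set \<Rightarrow> ('a \<Rightarrow> 'a \<Rightarrow> bool) \<Rightarrow> nat \<Rightarrow> 'a set set \<Rightarrow> 'a set \<Rightarrow> bool" where
  "unblocked_Ks V E r P S \<longleftrightarrow> (\<forall>R'\<in>cliques V E r. R' \<subseteq> S \<longrightarrow> R' \<notin> P)"

definition unproc_deg ::
  "'a set \<Rightarrow> ('a \<Rightarrow> 'a \<Rightarrow> bool) \<Rightarrow> nat \<Rightarrow> nat \<Rightarrow> 'a set list \<Rightarrow> nat \<Rightarrow> 'a set \<Rightarrow> nat" where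
  "unproc_deg V E r s Rs i R = Sdeg (unproc_Ks V E r s (set (take i Rs))) R"

lemma process_Ks_self: "process_Ks V E r P R S \<delta> R = \<delta> R"
  by (simp add: process_Ks_def)

lemma fold_process_Ks_other:
  assumes "R' \<noteq> R" "R' \<in> cliques V E r"
  shows "fold (process_Ks V E r P R) Ss \<delta> R' =
    max (\<delta> R' - length (filter (\<lambda>S. unblocked_Ks V E r P S \<and> R' \<subseteq> S) Ss)) (min (\<delta> R') (\<delta> R))"
proof (induction Ss arbitrary: \<delta>)
  case Nil
  then show ?case by simp
next
  case (Cons S Ss)
  let ?\<delta>' = "process_Ks V E r P R S \<delta>"
  have "?\<delta>' R' = (if unblocked_Ks V E r P S \<and> R' \<subseteq> S \<and> \<delta> R' > \<delta> R then \<delta> R' - 1 else \<delta> R')"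
    using assms by (auto simp: process_Ks_def unblocked_Ks_def)
  then show ?case
    using Cons.IH[of ?\<delta>'] by (auto simp: process_Ks_self)
qed

lemma finite_cliques: "simple_graph V E \<Longrightarrow> finite (cliques V E s)"
  unfolding simple_graph_def cliques_def by (rule finite_subset[of _ "Pow V"]) auto

lemma set_take_Suc_nth: "j < length xs \<Longrightarrow> set (take (Suc j) xs) = insert (xs ! j) (set (take j xs))"
  by (simp add: take_Suc_conv_app_nth)

lemma nth_notin_set_take: "distinct xs \<Longrightarrow> j < length xs \<Longrightarrow> xs ! j \<notin> set (take j xs)"
  using distinct_take[of xs "Suc j"] by (simp add: take_Suc_conv_app_nth)

lemma Sdeg_unproc_Ks_insert:
  assumes "simple_graph V E" "R\<^sub>0 \<in> cliques V E r"
  shows "Sdeg (unproc_Ks V E r s P) R =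
    Sdeg (unproc_Ks V E r s (insert R\<^sub>0 P)) R + card {S \<in> unproc_Ks V E r s P. R \<subseteq> S \<and> R\<^sub>0 \<subseteq> S}"
proof -
  have fin: "finite (unproc_Ks V E r s Q)" for Q
    using finite_cliques[OF assms(1)] unfolding unproc_Ks_def by (rule finite_subset[rotated]) auto
  have "{S \<in> unproc_Ks V E r s P. R \<subseteq> S} =
      {S \<in> unproc_Ks V E r s (insert R\<^sub>0 P). R \<subseteq> S} \<union> {S \<in> unproc_Ks V E r s P. R \<subseteq> S \<and> R\<^sub>0 \<subseteq> S}"
    using assms(2) unfolding unproc_Ks_def by auto
  moreover have "{S \<in> unproc_Ks V E r s (insert R\<^sub>0 P). R \<subseteq> S} \<inter> {S \<in> unproc_Ks V E r s P. R \<subseteq> S \<and> R\<^sub>0 \<subseteq> S} = {}"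
    using assms(2) unfolding unproc_Ks_def by auto
  ultimately show ?thesis
    unfolding Sdeg_def using fin by (simp add: card_Un_disjoint)
qed

lemma setk_run_clique:
  "setk_run V E r s Rs ds \<Longrightarrow> j < length Rs \<Longrightarrow> Rs ! j \<in> cliques V E r"
  unfolding setk_run_def by (metis nth_mem)

lemma setk_run_kappa_le:
  assumes "setk_run V E r s Rs ds" "j < length Rs"
    and "R \<in> cliques V E r" "R \<notin> set (take j Rs)"
  shows "kappa_at Rs ds j \<le> ds j R"
  using assms unfolding setk_run_def kappa_at_def by blast

lemma setk_run_step:
  assumes G: "simple_graph V E" and run: "setk_run V E r s Rs ds" and j: "j < length Rs"
    and R: "R \<in> cliques V E r" "R \<notin> set (take (Suc j) Rs)"
  shows "\<exists>c. unproc_deg V E r s Rs j R = unproc_deg V E r s Rs (Suc j) R + c \<and>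
    ds (Suc j) R = max (ds j R - c) (min (ds j R) (kappa_at Rs ds j))"
proof -
  let ?P = "set (take j Rs)" and ?R\<^sub>j = "Rs ! j"
  obtain Ss where Ss: "distinct Ss" "set Ss = {S \<in> cliques V E s. ?R\<^sub>j \<subseteq> S}"
    "ds (Suc j) = fold (process_Ks V E r ?P ?R\<^sub>j) Ss (ds j)"
    using run j unfolding setk_run_def by blast
  have "R \<noteq> ?R\<^sub>j"
    using R(2) j by (auto simp: set_take_Suc_nth)
  then have step: "ds (Suc j) R = max (ds j R - length (filter (\<lambda>S. unblocked_Ks V E r ?P S \<and> R \<subseteq> S) Ss))
      (min (ds j R) (kappa_at Rs ds j))"
    using fold_process_Ks_other[OF _ R(1)] Ss(3) by (simp add: kappa_at_def)
  have "length (filter (\<lambda>S. unblocked_Ks V E r ?P S \<and> R \<subseteq> S) Ss)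
      = card (set (filter (\<lambda>S. unblocked_Ks V E r ?P S \<and> R \<subseteq> S) Ss))"
    using distinct_card[OF distinct_filter[OF Ss(1)]] by simp
  also have "set (filter (\<lambda>S. unblocked_Ks V E r ?P S \<and> R \<subseteq> S) Ss) =
      {S \<in> unproc_Ks V E r s ?P. R \<subseteq> S \<and> ?R\<^sub>j \<subseteq> S}"
    using Ss(2) unfolding unproc_Ks_def unblocked_Ks_def by auto
  finally have count: "length (filter (\<lambda>S. unblocked_Ks V E r ?P S \<and> R \<subseteq> S) Ss)
      = card {S \<in> unproc_Ks V E r s ?P. R \<subseteq> S \<and> ?R\<^sub>j \<subseteq> S}" .
  have "unproc_deg V E r s Rs j R = unproc_deg V E r s Rs (Suc j) R
      + card {S \<in> unproc_Ks V E r s ?P. R \<subseteq> S \<and> ?R\<^sub>j \<subseteq> S}"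
    unfolding unproc_deg_def set_take_Suc_nth[OF j]
    by (rule Sdeg_unproc_Ks_insert[OF G setk_run_clique[OF run j]])
  with step count show ?thesis by metis
qed

lemma setk_run_unproc_deg_0: "setk_run V E r s Rs ds \<Longrightarrow> ds 0 R = unproc_deg V E r s Rs 0 R"
  unfolding setk_run_def init_delta_def unproc_deg_def Sdeg_def unproc_Ks_def by simp

lemma unproc_deg_le_delta:
  assumes G: "simple_graph V E" and run: "setk_run V E r s Rs ds" and i: "i < length Rs"
    and R: "R \<in> cliques V E r" "R \<notin> set (take i Rs)"
  shows "j \<le> i \<Longrightarrow> unproc_deg V E r s Rs j R \<le> ds j R"
proof (induction j)
  case 0
  then show ?case by (simp add: setk_run_unproc_deg_0[OF run])
next
  case (Suc j)
  have "j < length Rs"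
    using Suc.prems i by simp
  moreover have "R \<notin> set (take (Suc j) Rs)"
    using R(2) set_take_subset_set_take[OF Suc.prems, of Rs] by blast
  ultimately obtain c where "unproc_deg V E r s Rs j R = unproc_deg V E r s Rs (Suc j) R + c"
      and "ds (Suc j) R = max (ds j R - c) (min (ds j R) (kappa_at Rs ds j))"
    using setk_run_step[OF G run _ R(1)] by blast
  then show ?case
    using Suc by linarith
qed

lemma kappa_at_Suc_mono:
  assumes G: "simple_graph V E" and run: "setk_run V E r s Rs ds" and j: "Suc j < length Rs"
  shows "kappa_at Rs ds j \<le> kappa_at Rs ds (Suc j)"
proof -
  let ?R = "Rs ! Suc j"
  have R: "?R \<in> cliques V E r"
    using setk_run_clique[OF run j] .
  have later: "?R \<notin> set (take (Suc j) Rs)"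
    using run j by (simp add: setk_run_def nth_notin_set_take)
  then have "?R \<notin> set (take j Rs)"
    using set_take_subset_set_take[of j "Suc j" Rs] by auto
  then have "kappa_at Rs ds j \<le> ds j ?R"
    using setk_run_kappa_le[OF run _ R] j by simp
  moreover obtain c where "ds (Suc j) ?R = max (ds j ?R - c) (min (ds j ?R) (kappa_at Rs ds j))"
    using setk_run_step[OF G run _ R later] j by auto
  ultimately show ?thesis
    by (simp add: kappa_at_def)
qed

lemma kappa_at_mono:
  assumes "simple_graph V E" "setk_run V E r s Rs ds" "j \<le> l" "l < length Rs"
  shows "kappa_at Rs ds j \<le> kappa_at Rs ds l"
  using assms(3,4)
proof (induction l rule: dec_induct)
  case (step l)
  then show ?case
    using kappa_at_Suc_mono[OF assms(1,2), of l] by simp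
qed simp

lemma delta_eq_unproc_deg_or_less:
  assumes G: "simple_graph V E" and run: "setk_run V E r s Rs ds" and i: "i < length Rs"
    and R: "R \<in> cliques V E r" "R \<notin> set (take i Rs)"
    and below: "\<forall>j<i. kappa_at Rs ds j < k"
  shows "j \<le> i \<Longrightarrow> ds j R = unproc_deg V E r s Rs j R \<or> ds j R < k"
proof (induction j)
  case 0
  then show ?case by (simp add: setk_run_unproc_deg_0[OF run])
next
  case (Suc j)
  have "j < length Rs"
    using Suc.prems i by simp
  moreover have "R \<notin> set (take (Suc j) Rs)"
    using R(2) set_take_subset_set_take[OF Suc.prems, of Rs] by blast
  ultimately obtain c where "unproc_deg V E r s Rs j R = unproc_deg V E r s Rs (Suc j) R + c"
      and "ds (Suc j) R = max (ds j R - c) (min (ds j R) (kappa_at Rs ds j))"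
    using setk_run_step[OF G run _ R(1)] by blast
  moreover have "kappa_at Rs ds j < k"
    using below Suc.prems by simp
  ultimately show ?case
    using Suc by (cases "min (ds j R) (kappa_at Rs ds j) \<le> ds j R - c") auto
qed

theorem claim2:
  fixes V :: "'a set" and E :: "'a \<Rightarrow> 'a \<Rightarrow> bool" and r s :: nat
    and Rs :: "'a set list" and ds :: "nat \<Rightarrow> 'a set \<Rightarrow> nat"
  assumes "simple_graph V E" and "0 < r" and "r < s"
    and "setk_run V E r s Rs ds"
    and "i < length Rs"
    and "R \<in> cliques V E r" and "R \<notin> set (take i Rs)"
  shows "Sdeg (unproc_Ks V E r s (set (take i Rs))) R \<le> ds i R
         \<and> ((\<exists>k. is_transition_time Rs ds k i) \<longrightarrow>
              ds i R = Sdeg (unproc_Ks V E r s (set (take i Rs))) R)"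
proof (intro conjI impI)
  note run_hyps = assms(1,4,5,6,7)
  show "Sdeg (unproc_Ks V E r s (set (take i Rs))) R \<le> ds i R"
    using unproc_deg_le_delta[OF run_hyps] by (simp add: unproc_deg_def)
  assume "\<exists>k. is_transition_time Rs ds k i"
  then obtain k where k: "kappa_at Rs ds i = k" "i = 0 \<or> kappa_at Rs ds (i - 1) < k"
    unfolding is_transition_time_def by blast
  have "kappa_at Rs ds j < k" if "j < i" for j
  proof -
    have "kappa_at Rs ds j \<le> kappa_at Rs ds (i - 1)"
      using kappa_at_mono[OF assms(1,4)] that assms(5) by simp
    then show ?thesis
      using k(2) that by auto
  qed
  moreover have "k \<le> ds i R"
    using setk_run_kappa_le[OF assms(4,5,6,7)] k(1) by simp
  ultimately show "ds i R = Sdeg (unproc_Ks V E r s (set (take i Rs))) R"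
    using delta_eq_unproc_deg_or_less[OF run_hyps, of k i] by (auto simp: unproc_deg_def)
qed

end
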